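(* Let $q$ be a prime power with $q\equiv 1\pmod 3$. The connected components of $C_A(q)$ are as follows: (a) there are exactly $q-1$ isolated vertices, namely the $\pi\in AGL(1,q)$ with $\pi(F)=F$ (and a vertex is isolated iff $\pi(F)=F$); (b) if $q$ is odd, every component that is not an isolated vertex is a cycle of length $6$; (c) if $q$ is even, every component that is not an isolated vertex is a cycle of length $3$.
   Context: $AGL(1,q)=\{x\mapsto ax+b: a\in GF(q)\setminus\{0\}, b\in GF(q)\}$, acting on $GF(q)$. For permutations $\pi,\sigma$ of a finite set, $hd(\pi,\sigma)$ is the number of points at which they differ. Fix a distinguished element $F\in GF(q)$. For a permutation $\pi$ of $GF(q)$, $\pi^{\triangle}$ is the permutation with $\pi^{\triangle}(\pi^{-1}(F))=\pi(F)$, $\pi^{\triangle}(F)=F$, and $\pi^{\triangle}(x)=\pi(x)$ otherwise. The contraction graph $C_A(q)$ has vertex set $AGL(1,q)$, with distinct $\pi,\sigma$ adjacent iff $hd(\pi^{\triangle},\sigma^{\triangle})=q-4$. *)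

theory Defs
  imports Main "HOL-Library.Cardinality"
begin

text \<open>GF(q) is modelled by an arbitrary finite field type 'a, with q = CARD('a).
  Permutations of GF(q) are functions 'a => 'a.\<close>

definition AGL :: "('a::{finite,field} \<Rightarrow> 'a) set" where
  "AGL = {(\<lambda>x. a * x + b) | a b. a \<noteq> 0}"

definition hd_dist :: "('a::finite \<Rightarrow> 'b) \<Rightarrow> ('a \<Rightarrow> 'b) \<Rightarrow> nat" where
  "hd_dist p s = card {x. p x \<noteq> s x}"

definition contr :: "'a \<Rightarrow> ('a \<Rightarrow> 'a) \<Rightarrow> ('a \<Rightarrow> 'a)" where
  "contr F p = (\<lambda>x. if x = F then F else if x = inv p F then p F else p x)"

definition CA_adj :: "'a::{finite,field} \<Rightarrow> ('a \<Rightarrow> 'a) \<Rightarrow> ('a \<Rightarrow> 'a) \<Rightarrow> bool" where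
  "CA_adj F p s \<longleftrightarrow> p \<in> AGL \<and> s \<in> AGL \<and> p \<noteq> s \<and>
      hd_dist (contr F p) (contr F s) = CARD('a) - 4"

definition isolated :: "('v \<Rightarrow> 'v \<Rightarrow> bool) \<Rightarrow> 'v \<Rightarrow> bool" where
  "isolated E v \<longleftrightarrow> (\<nexists>w. E v w)"

definition component :: "'v set \<Rightarrow> ('v \<Rightarrow> 'v \<Rightarrow> bool) \<Rightarrow> 'v \<Rightarrow> 'v set" where
  "component V E v = {w \<in> V. (\<lambda>x y. x \<in> V \<and> y \<in> V \<and> E x y)\<^sup>*\<^sup>* v w}"

definition is_cycle :: "('v \<Rightarrow> 'v \<Rightarrow> bool) \<Rightarrow> 'v set \<Rightarrow> nat \<Rightarrow> bool" where
  "is_cycle E C k \<longleftrightarrow> 3 \<le> k \<and> (\<exists>vs. distinct vs \<and> length vs = k \<and> set vs = C \<and>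
     (\<forall>u\<in>C. \<forall>w\<in>C. E u w \<longleftrightarrow>
        (\<exists>i<k. (u = vs ! i \<and> w = vs ! ((i + 1) mod k)) \<or> (w = vs ! i \<and> u = vs ! ((i + 1) mod k)))))"

end

theory Submission
  imports Defs "HOL-Algebra.Sylow" "HOL-Number_Theory.Residues"
begin

text \<open>Write every p in AGL(1,q) in coordinates centred at F, p x = a (x - F) + F + b, so that
  p F = F + b. The contractions of p = (a,b) and s = (c,d) agree at F, and elsewhere only at the
  preimages of F under p and s and at no more than one further point, so hd = q - 4 forces all four.
  Solving them gives b \<noteq> 0, c = a r and d = b (1 + r) with r^2 + r + 1 = 0, so r is one of the two
  primitive cube roots of unity w, w^2, which exist because 3 divides q - 1. Hence p is isolated iff
  b = 0, i.e. p F = F, and otherwise its two neighbours are f p and f^-1 p for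
  f (a,b) = (a w, b (1 + w)), since w^2 = w^-1 and 1 + w^2 = (1 + w)^-1. The component of p is
  therefore its f-orbit, a cycle whose length is the order of the pair (w, 1 + w) = (w, -w^2):
  6 if -1 \<noteq> 1 (q odd) and 3 if -1 = 1 (q even).\<close>

text \<open>Cauchy's theorem, as the case p^1 of Sylow's theorem.\<close>

lemma exists_elem_of_prime_order:
  assumes "group G" "finite (carrier G)" "prime p" "p dvd order G"
  shows "\<exists>x\<in>carrier G. x \<noteq> \<one>\<^bsub>G\<^esub> \<and> x [^]\<^bsub>G\<^esub> p = \<one>\<^bsub>G\<^esub>"
proof -
  obtain m where m: "order G = p ^ 1 * m" using assms(4) by auto
  obtain H where H: "subgroup H G" "card H = p"
    using sylow_thm[OF assms(3,1) m assms(2)] by auto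
  interpret H: group "G\<lparr>carrier := H\<rparr>"
    using subgroup.subgroup_is_group[OF H(1) assms(1)] .
  have "H \<noteq> {\<one>\<^bsub>G\<^esub>}" using H(2) prime_gt_1_nat[OF assms(3)] by auto
  moreover have "\<one>\<^bsub>G\<^esub> \<in> H" using H(1) by (rule subgroup.one_closed)
  ultimately obtain x where x: "x \<in> H" "x \<noteq> \<one>\<^bsub>G\<^esub>" by blast
  have "x [^]\<^bsub>G\<lparr>carrier := H\<rparr>\<^esub> order (G\<lparr>carrier := H\<rparr>) = \<one>\<^bsub>G\<^esub>"
    using H.pow_order_eq_1[of x] x(1) by simp
  then have "x [^]\<^bsub>G\<^esub> p = \<one>\<^bsub>G\<^esub>"
    using H(2) by (simp add: order_def nat_pow_def)
  then show ?thesis using x subgroup.mem_carrier[OF H(1)] by blast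
qed

definition add_group :: "'a::field monoid" where
  "add_group = \<lparr>carrier = UNIV, monoid.mult = (+), one = 0\<rparr>"

definition mult_group :: "'a::field monoid" where
  "mult_group = \<lparr>carrier = UNIV - {0}, monoid.mult = (*), one = 1\<rparr>"

lemma group_add_group: "group (add_group :: 'a::field monoid)"
  unfolding add_group_def by (rule groupI) (auto simp: add.assoc intro!: exI[where x="- _"])

lemma group_mult_group: "group (mult_group :: 'a::field monoid)"
  unfolding mult_group_def by (rule groupI) (auto simp: mult.assoc intro!: bexI[where x="inverse _"])

lemma add_group_pow: "x [^]\<^bsub>add_group\<^esub> n = of_nat n * x"
  by (induction n) (auto simp: add_group_def algebra_simps)

lemma mult_group_pow: "x [^]\<^bsub>mult_group\<^esub> n = x ^ n"
  by (induction n) (auto simp: mult_group_def)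

lemma two_eq_zero_iff_even_card: "(2::'a::{finite,field}) = 0 \<longleftrightarrow> even CARD('a)"
proof
  assume "(2::'a) = 0"
  then have "CHAR('a) dvd 2" using of_nat_eq_0_iff_char_dvd[where 'a='a, of 2] by simp
  then have "CHAR('a) = 2" using CHAR_not_1' by (metis two_is_prime_nat prime_nat_iff One_nat_def)
  then show "even CARD('a)" using CHAR_dvd_CARD by metis
next
  assume "even CARD('a)"
  then have "\<exists>x\<in>carrier add_group. x \<noteq> \<one>\<^bsub>add_group\<^esub> \<and> x [^]\<^bsub>add_group\<^esub> (2::nat) = (\<one>\<^bsub>add_group\<^esub> :: 'a)"
    by (intro exists_elem_of_prime_order group_add_group) (auto simp: add_group_def order_def)
  then obtain x :: 'a where "x \<noteq> 0" "2 * x = 0"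
    by (auto simp: add_group_pow) (auto simp: add_group_def)
  then show "(2::'a) = 0" by simp
qed

lemma exists_primitive_cube_root_of_unity:
  assumes "CARD('a::{finite,field}) mod 3 = 1"
  obtains w :: "'a::{finite,field}" where "w\<^sup>2 + w + 1 = 0" "w \<noteq> 1"
proof -
  have "\<exists>x\<in>carrier mult_group. x \<noteq> \<one>\<^bsub>mult_group\<^esub> \<and> x [^]\<^bsub>mult_group\<^esub> (3::nat) = (\<one>\<^bsub>mult_group\<^esub> :: 'a)"
    using assms
    by (intro exists_elem_of_prime_order group_mult_group)
       (auto simp: mult_group_def order_def card_Diff_singleton intro!: mod_eq_dvd_iff_nat[THEN iffD1])
  then obtain w :: 'a where w: "w \<noteq> 1" "w ^ 3 = 1"
    by (auto simp: mult_group_pow) (auto simp: mult_group_def)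
  have "(w - 1) * (w\<^sup>2 + w + 1) = w ^ 3 - 1" by (simp add: algebra_simps power2_eq_square power3_eq_cube)
  with w have "w\<^sup>2 + w + 1 = 0" by simp
  then show thesis using w(1) by (rule that)
qed

lemma primitive_cube_root_of_unity:
  fixes w :: "'a::field"
  assumes w: "w\<^sup>2 + w + 1 = 0" "w \<noteq> 1"
  shows "w ^ 3 = 1" "w \<noteq> 0" "w\<^sup>2 \<noteq> 1" "1 + w = - w\<^sup>2"
proof -
  have "w ^ 3 - 1 = (w - 1) * (w\<^sup>2 + w + 1)"
    by (simp add: algebra_simps power2_eq_square power3_eq_cube)
  with w(1) show w3: "w ^ 3 = 1" by simp
  show "w \<noteq> 0" using w(1) by auto
  show "w\<^sup>2 \<noteq> 1"
  proof
    assume "w\<^sup>2 = 1"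
    then have "w ^ 3 = w" by (simp add: power2_eq_square power3_eq_cube)
    with w(2) w3 show False by simp
  qed
  show "1 + w = - w\<^sup>2"
    using w(1) by (simp add: eq_neg_iff_add_eq_0 algebra_simps)
qed

lemma primitive_cube_root_power_eq_1_iff:
  fixes w :: "'a::field"
  assumes w: "w\<^sup>2 + w + 1 = 0" "w \<noteq> 1"
  shows "w ^ m = 1 \<longleftrightarrow> 3 dvd m"
proof -
  note w_facts = primitive_cube_root_of_unity[OF w]
  have "w ^ m = (w ^ 3) ^ (m div 3) * w ^ (m mod 3)"
    by (simp add: power_mult[symmetric] power_add[symmetric])
  also have "\<dots> = w ^ (m mod 3)" using w_facts(1) by simp
  finally have "w ^ m = w ^ (m mod 3)" .
  moreover have "m mod 3 = 0 \<or> m mod 3 = 1 \<or> m mod 3 = 2" by arith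
  ultimately show ?thesis using w(2) w_facts(3) by auto
qed

lemma cube_root_and_successor_power_eq_1_iff:
  fixes w :: "'a::field"
  assumes w: "w\<^sup>2 + w + 1 = 0" "w \<noteq> 1"
  shows "w ^ m = 1 \<and> (1 + w) ^ m = 1 \<longleftrightarrow> 3 dvd m \<and> (- 1) ^ m = (1::'a)"
proof -
  have "(1 + w) ^ m = (- 1) ^ m * (w ^ m)\<^sup>2"
    unfolding primitive_cube_root_of_unity(4)[OF w]
    by (subst power_minus) (simp add: power2_eq_square power_mult_distrib)
  then show ?thesis
    using primitive_cube_root_power_eq_1_iff[OF w, of m] by (cases "3 dvd m") simp_all
qed

lemma cube_root_polynomial_eq_0_iff:
  fixes w r :: "'a::field"
  assumes w: "w\<^sup>2 + w + 1 = 0" "w \<noteq> 1"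
  shows "r\<^sup>2 + r + 1 = 0 \<longleftrightarrow> r = w \<or> r = w\<^sup>2"
proof -
  have "(r - w) * (r - w\<^sup>2) = r\<^sup>2 + r + 1 - r * (w\<^sup>2 + w + 1) + (w ^ 3 - 1)"
    by (simp add: algebra_simps power2_eq_square power3_eq_cube)
  with w primitive_cube_root_of_unity(1)[OF w] have "r\<^sup>2 + r + 1 = (r - w) * (r - w\<^sup>2)" by simp
  then show ?thesis by simp
qed

lemma cube_root_and_successor_order_odd_card:
  fixes w :: "'a::{finite,field}"
  assumes w: "w\<^sup>2 + w + 1 = 0" "w \<noteq> 1" and odd: "odd CARD('a)"
  shows "w ^ m = 1 \<and> (1 + w) ^ m = 1 \<longleftrightarrow> 6 dvd m"
proof -
  have "(- 1 :: 'a) \<noteq> 1"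
    using odd two_eq_zero_iff_even_card[where 'a='a] by (simp add: eq_neg_iff_add_eq_0 one_add_one)
  then have "(- 1) ^ m = (1::'a) \<longleftrightarrow> even m"
    by (simp add: minus_one_power_iff)
  moreover have "3 dvd m \<and> even m \<longleftrightarrow> 6 dvd m"
    by presburger
  ultimately show ?thesis
    using cube_root_and_successor_power_eq_1_iff[OF w, of m] by simp
qed

lemma cube_root_and_successor_order_even_card:
  fixes w :: "'a::{finite,field}"
  assumes w: "w\<^sup>2 + w + 1 = 0" "w \<noteq> 1" and even: "even CARD('a)"
  shows "w ^ m = 1 \<and> (1 + w) ^ m = 1 \<longleftrightarrow> 3 dvd m"
proof -
  have "(- 1 :: 'a) = 1"
    using even two_eq_zero_iff_even_card[where 'a='a] by (simp add: eq_neg_iff_add_eq_0 one_add_one)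
  then have "(- 1) ^ m = (1::'a)"
    by (metis power_one)
  then show ?thesis
    using cube_root_and_successor_power_eq_1_iff[OF w, of m] by simp
qed

lemma power_pred_eq_if_mult_eq_1:
  fixes x y :: "'a::comm_monoid_mult"
  assumes "x ^ k = 1" "x * y = 1" "0 < k"
  shows "x ^ (k - 1) = y"
proof -
  have "x ^ (k - 1) = x ^ (k - 1) * (x * y)" using assms(2) by simp
  also have "\<dots> = x ^ k * y" using assms(3) by (simp add: mult.assoc[symmetric] power_Suc2[symmetric])
  finally show ?thesis using assms(1) by simp
qed

lemma powers_distinct_below_order:
  fixes x y :: "'a::field"
  assumes order: "\<And>m. x ^ m = 1 \<and> y ^ m = 1 \<longleftrightarrow> k dvd m"
    and "x \<noteq> 0" "y \<noteq> 0" "i < j" "j < k"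
  shows "x ^ i \<noteq> x ^ j \<or> y ^ i \<noteq> y ^ j"
proof (rule ccontr)
  assume "\<not> (x ^ i \<noteq> x ^ j \<or> y ^ i \<noteq> y ^ j)"
  then have "x ^ i = x ^ j" "y ^ i = y ^ j" by simp_all
  moreover have "j = i + (j - i)" using assms(4) by simp
  ultimately have "x ^ i * x ^ (j - i) = x ^ i * 1" "y ^ i * y ^ (j - i) = y ^ i * 1"
    by (metis power_add mult_1_right)+
  then have "k dvd j - i"
    using order[of "j - i"] assms(2,3) by simp
  with assms(4,5) show False by (auto dest: dvd_imp_le)
qed

definition affine_about :: "'a::field \<Rightarrow> 'a \<Rightarrow> 'a \<Rightarrow> 'a \<Rightarrow> 'a" where
  "affine_about F a b = (\<lambda>x. a * (x - F) + F + b)"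

lemma affine_about_at_centre [simp]: "affine_about F a b F = F + b"
  by (simp add: affine_about_def)

lemma affine_about_eq_iff: "affine_about F a b = affine_about F c d \<longleftrightarrow> a = c \<and> b = d"
proof
  assume eq: "affine_about F a b = affine_about F c d"
  from fun_cong[OF eq, of F] have "b = d" by simp
  moreover from fun_cong[OF eq, of "F + 1"] have "a + F + b = c + F + d"
    by (simp add: affine_about_def)
  ultimately show "a = c \<and> b = d" by simp
qed simp

lemma AGL_eq_affine_about: "AGL = {affine_about F a b | a b. a \<noteq> 0}"
proof -
  have "(\<lambda>x. a * x + b) = affine_about F a (a * F + b - F)" for a b :: 'a
    by (auto simp: affine_about_def algebra_simps)
  moreover have "affine_about F a b = (\<lambda>x. a * x + (b + F - a * F))" for a b :: 'a
    by (auto simp: affine_about_def algebra_simps)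
  ultimately show ?thesis unfolding AGL_def by blast
qed

lemma affine_about_in_AGL: "a \<noteq> 0 \<Longrightarrow> affine_about F a b \<in> AGL"
  using AGL_eq_affine_about by blast

lemma AGL_obtain_affine_about:
  assumes "p \<in> AGL"
  obtains a b where "a \<noteq> 0" "p = affine_about F a b"
  using assms AGL_eq_affine_about[of F] by blast

lemma inv_affine_about_at_centre:
  assumes "a \<noteq> 0"
  shows "Hilbert_Choice.inv (affine_about F a b) F = F - b / a"
proof (rule inv_f_eq)
  show "inj (affine_about F a b)"
    using assms by (intro injI) (simp add: affine_about_def)
  show "affine_about F a b (F - b / a) = F"
    using assms by (simp add: affine_about_def)
qed

lemma contr_affine_about:
  assumes "a \<noteq> 0"
  shows "contr F (affine_about F a b) =
    (\<lambda>x. if x = F then F else if x = F - b / a then F + b else affine_about F a b x)"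
  unfolding contr_def inv_affine_about_at_centre[OF assms] by (rule ext) (simp add: affine_about_def)

lemma hd_dist_eq_iff_card_agree:
  fixes p s :: "'a::finite \<Rightarrow> 'b"
  assumes "k \<le> CARD('a)"
  shows "hd_dist p s = CARD('a) - k \<longleftrightarrow> card {x. p x = s x} = k"
proof -
  have "{x. p x \<noteq> s x} = UNIV - {x. p x = s x}" by auto
  then have "hd_dist p s = CARD('a) - card {x. p x = s x}"
    unfolding hd_dist_def by (simp add: card_Diff_subset)
  moreover have "card {x. p x = s x} \<le> CARD('a)" by (rule card_mono) auto
  ultimately show ?thesis using assms by auto
qed

lemma card_agree_affine_about_le_1:
  assumes "affine_about F a b \<noteq> affine_about F c d"
  shows "card {x. affine_about F a b x = affine_about F c d x} \<le> 1"
proof -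
  have "x = y" if x: "a * (x - F) + b = c * (x - F) + d" and y: "a * (y - F) + b = c * (y - F) + d"
    for x y
  proof -
    have "a \<noteq> c"
      using assms x by (auto simp: affine_about_eq_iff)
    moreover from x y have "(a - c) * (x - y) = 0" by Groebner_Basis.algebra
    ultimately show "x = y" by simp
  qed
  then show ?thesis
    using card_le_Suc0_iff_eq[of "{x. affine_about F a b x = affine_about F c d x}"]
    by (cases "finite {x. affine_about F a b x = affine_about F c d x}") (auto simp: affine_about_def)
qed

lemma agree_contr_affine_about_cover:
  assumes "a \<noteq> 0" "c \<noteq> 0" "affine_about F a b \<noteq> affine_about F c d"
  obtains D where
    "{x. contr F (affine_about F a b) x = contr F (affine_about F c d) x} \<subseteq> {F, F - b / a, F - d / c} \<union> D"
    "card D \<le> 1"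
proof
  show "{x. contr F (affine_about F a b) x = contr F (affine_about F c d) x}
    \<subseteq> {F, F - b / a, F - d / c} \<union> {x. affine_about F a b x = affine_about F c d x}"
    unfolding contr_affine_about[OF assms(1)] contr_affine_about[OF assms(2)] by auto
qed (rule card_agree_affine_about_le_1[OF assms(3)])

lemma card_agree_contr_affine_about_le_4:
  fixes F a b c d :: "'a::{finite,field}"
  assumes "a \<noteq> 0" "c \<noteq> 0" "affine_about F a b \<noteq> affine_about F c d"
  shows "card {x. contr F (affine_about F a b) x = contr F (affine_about F c d) x} \<le> 4"
proof -
  obtain D where
    cover: "{x. contr F (affine_about F a b) x = contr F (affine_about F c d) x} \<subseteq> {F, F - b / a, F - d / c} \<union> D"
    and "card D \<le> 1"
    by (rule agree_contr_affine_about_cover[OF assms])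
  moreover have "card {F, F - b / a, F - d / c} \<le> 3"
    by (simp add: card_insert_if)
  ultimately show ?thesis
    using card_mono[OF finite cover] card_Un_le[of "{F, F - b / a, F - d / c}" D] by linarith
qed

lemma card_agree_contr_affine_about_eq_4_imp:
  fixes F a b c d :: "'a::{finite,field}"
  assumes a: "a \<noteq> 0" and c: "c \<noteq> 0" and ne: "affine_about F a b \<noteq> affine_about F c d"
    and four: "card {x. contr F (affine_about F a b) x = contr F (affine_about F c d) x} = 4"
  obtains r where "b \<noteq> 0" "r\<^sup>2 + r + 1 = 0" "c = a * r" "d = b * (1 + r)"
proof -
  define A where "A = {x. contr F (affine_about F a b) x = contr F (affine_about F c d) x}"
  define S where "S = {F, F - b / a, F - d / c}"
  obtain D where AD: "A \<subseteq> S \<union> D" and D: "card D \<le> 1"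
    using agree_contr_affine_about_cover[OF a c ne] unfolding A_def S_def by blast
  have S: "card S \<le> 3" unfolding S_def by (simp add: card_insert_if)
  have "card (S \<union> D) \<le> card A"
    using card_Un_le[of S D] S D four unfolding A_def by linarith
  then have "A = S \<union> D"
    using AD card_mono[OF _ AD] by (intro card_subset_eq) auto
  then have "card S = 3" and "S \<subseteq> A"
    using card_Un_le[of S D] S D four unfolding A_def by auto
  then have dist: "F \<noteq> F - b / a" "F \<noteq> F - d / c" "F - b / a \<noteq> F - d / c"
    and agree: "F - b / a \<in> A" "F - d / c \<in> A"
    unfolding S_def by (auto simp: card_insert_if split: if_splits)
  have b: "b \<noteq> 0" using dist(1) by simp
  define r where "r = c / a"
  have cr: "c = a * r" using a by (simp add: r_def)
  have r0: "r \<noteq> 0" using c cr by auto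
  from agree(1) dist have "F + b = c * (- (b / a)) + F + d"
    unfolding A_def contr_affine_about[OF a] contr_affine_about[OF c]
    by (simp add: affine_about_def)
  then have dr: "d = b * (1 + r)"
    using a by (simp add: cr field_simps)
  from agree(2) dist have "a * (- (d / c)) + F + b = F + d"
    unfolding A_def contr_affine_about[OF a] contr_affine_about[OF c]
    by (simp add: affine_about_def)
  then have "b * r = d * (1 + r)"
    using a r0 by (simp add: cr field_simps)
  then have "b * (r\<^sup>2 + r + 1) = 0"
    unfolding dr by (simp add: algebra_simps power2_eq_square)
  with b have "r\<^sup>2 + r + 1 = 0" by simp
  with b cr dr show thesis using that by blast
qed

lemma card_agree_contr_affine_about_eq_4:
  fixes F a b r :: "'a::{finite,field}"
  assumes a: "a \<noteq> 0" and b: "b \<noteq> 0" and r: "r\<^sup>2 + r + 1 = 0" "r \<noteq> 1"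
  shows "card {x. contr F (affine_about F a b) x = contr F (affine_about F (a * r) (b * (1 + r))) x} = 4"
    (is "card ?A = 4")
proof -
  note r_facts = primitive_cube_root_of_unity[OF r]
  have r0: "r \<noteq> 0" and r1: "1 - r \<noteq> 0" and r2: "1 + r \<noteq> 0"
    using r r_facts by auto
  have ar: "a * r \<noteq> 0" using a r0 by simp
  define u where "u = b / a"
  have u: "u \<noteq> 0" "a * u = b" using a b by (simp_all add: u_def)
  have preimage: "F - b * (1 + r) / (a * r) = F + u * r"
    using a r0 by (simp add: u_def r_facts(4) field_simps power2_eq_square)
  have "affine_about F a b \<noteq> affine_about F (a * r) (b * (1 + r))"
    using a r(2) by (simp add: affine_about_eq_iff)
  then have le: "card ?A \<le> 4"
    by (rule card_agree_contr_affine_about_le_4[OF a ar])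
  define t where "t = r / (1 - r)"
  define T where "T = {0, -1, r, t}"
  have T: "r \<noteq> -1" "t \<noteq> 0" "t \<noteq> -1" "t \<noteq> r"
    using r0 r1 r2 by (auto simp: t_def field_simps eq_neg_iff_add_eq_0 add.commute)
  then have "card T = 4"
    using r0 by (simp add: T_def)
  moreover have "inj (\<lambda>x. F + u * x)"
    using u(1) by (intro injI) simp
  moreover have "(\<lambda>x. F + u * x) ` T \<subseteq> ?A"
  proof -
    have "u * r \<noteq> - u" "u * t \<noteq> - u" "u * t \<noteq> u * r" "u * t \<noteq> 0"
      using T u(1) by (metis mult_minus1_right mult_left_cancel mult_eq_0_iff)+
    moreover have "a * r * (- u) + F + b * (1 + r) = F + b"
      unfolding u(2)[symmetric] by (simp add: algebra_simps)
    moreover have "a * (u * r) + F + b = F + b * (1 + r)"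
      unfolding u(2)[symmetric] by (simp add: algebra_simps)
    moreover have "a * (u * t) + F + b = a * r * (u * t) + F + b * (1 + r)"
      using r1 unfolding u(2)[symmetric] t_def by (simp add: field_simps)
    ultimately show ?thesis
      unfolding contr_affine_about[OF a] contr_affine_about[OF ar] preimage
      using u r0 by (auto simp: T_def u_def[symmetric] affine_about_def)
  qed
  ultimately have "4 \<le> card ?A"
    using card_mono[of ?A "(\<lambda>x. F + u * x) ` T"] card_image[of "\<lambda>x. F + u * x" T]
    by (simp add: inj_on_subset)
  with le show ?thesis by simp
qed

lemma CA_adj_affine_about_iff:
  fixes F a b w :: "'a::{finite,field}"
  assumes a: "a \<noteq> 0" and w: "w\<^sup>2 + w + 1 = 0" "w \<noteq> 1" and q: "4 \<le> CARD('a)"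
  shows "CA_adj F (affine_about F a b) s \<longleftrightarrow>
    b \<noteq> 0 \<and> (s = affine_about F (a * w) (b * (1 + w)) \<or> s = affine_about F (a * w\<^sup>2) (b * (1 + w\<^sup>2)))"
    (is "?adj \<longleftrightarrow> _")
proof -
  have roots: "r\<^sup>2 + r + 1 = 0 \<longleftrightarrow> r \<in> {w, w\<^sup>2}" for r
    using cube_root_polynomial_eq_0_iff[OF w] by simp
  have w2: "w\<^sup>2 \<noteq> 1" by (rule primitive_cube_root_of_unity(3)[OF w])
  show ?thesis
  proof
    assume adj: ?adj
    then obtain c d where c: "c \<noteq> 0" and s: "s = affine_about F c d"
      unfolding CA_adj_def by (blast elim: AGL_obtain_affine_about)
    from adj have "affine_about F a b \<noteq> affine_about F c d"
      "card {x. contr F (affine_about F a b) x = contr F (affine_about F c d) x} = 4"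
      using hd_dist_eq_iff_card_agree[OF q] unfolding CA_adj_def s by auto
    then obtain r where "b \<noteq> 0" "r\<^sup>2 + r + 1 = 0" "c = a * r" "d = b * (1 + r)"
      by (rule card_agree_contr_affine_about_eq_4_imp[OF a c])
    then show "b \<noteq> 0 \<and> (s = affine_about F (a * w) (b * (1 + w)) \<or>
        s = affine_about F (a * w\<^sup>2) (b * (1 + w\<^sup>2)))"
      using roots s by auto
  next
    assume "b \<noteq> 0 \<and> (s = affine_about F (a * w) (b * (1 + w)) \<or>
        s = affine_about F (a * w\<^sup>2) (b * (1 + w\<^sup>2)))"
    then obtain r where b: "b \<noteq> 0" and r: "r \<in> {w, w\<^sup>2}"
      and s: "s = affine_about F (a * r) (b * (1 + r))" by blast
    have r1: "r\<^sup>2 + r + 1 = 0" "r \<noteq> 1" using roots r w(2) w2 by auto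
    then have "r \<noteq> 0" by auto
    moreover have "hd_dist (contr F (affine_about F a b)) (contr F (affine_about F (a * r) (b * (1 + r))))
        = CARD('a) - 4"
      using card_agree_contr_affine_about_eq_4[OF a b r1] hd_dist_eq_iff_card_agree[OF q] by blast
    ultimately show ?adj
      using a r1(2) unfolding CA_adj_def s by (simp add: affine_about_in_AGL affine_about_eq_iff)
  qed
qed

lemma periodic_eq_mod:
  fixes P :: "nat \<Rightarrow> 'a"
  assumes "\<And>i. P (i + k) = P i"
  shows "P i = P (i mod k)"
proof -
  have "P (j + m * k) = P j" for j m
  proof (induction m)
    case (Suc m)
    have "j + Suc m * k = (j + m * k) + k" by simp
    with Suc show ?case by (simp only: assms)
  qed simp
  from this[of "i mod k" "i div k"] show ?thesis by simp
qed

lemma mod_pred_eq_iff: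
  fixes i j k :: nat
  assumes "i < k" "j < k"
  shows "j = (i + k - 1) mod k \<longleftrightarrow> i = (j + 1) mod k"
proof -
  have "(i + k - 1) mod k = (if i = 0 then k - 1 else i - 1)"
    using assms(1) by (auto simp: mod_if)
  moreover have "(j + 1) mod k = (if j + 1 = k then 0 else j + 1)"
    using assms(2) by (auto simp: mod_if)
  ultimately show ?thesis using assms by auto
qed

lemma component_eq_range:
  assumes in_V: "\<And>i. P i \<in> V" and step: "\<And>i. E (P i) (P (Suc i))"
    and closed: "\<And>i w. w \<in> V \<Longrightarrow> E (P i) w \<Longrightarrow> w \<in> range P"
  shows "component V E (P 0) = range P"
proof -
  let ?E = "\<lambda>x y. x \<in> V \<and> y \<in> V \<and> E x y"
  have "?E\<^sup>*\<^sup>* (P 0) (P i)" for i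
  proof (induction i)
    case (Suc i)
    then show ?case using in_V step by (simp add: rtranclp.rtrancl_into_rtrancl)
  qed simp
  moreover have "w \<in> range P" if "?E\<^sup>*\<^sup>* (P 0) w" for w
    using that by (induction rule: rtranclp_induct) (auto intro: closed)
  ultimately show ?thesis
    unfolding component_def using in_V by blast
qed

lemma is_cycle_component_of_periodic:
  fixes P :: "nat \<Rightarrow> 'v"
  assumes k: "3 \<le> k" and periodic: "\<And>i. P (i + k) = P i" and dist: "distinct (map P [0..<k])"
    and in_V: "\<And>i. P i \<in> V"
    and nbrs: "\<And>i w. w \<in> V \<Longrightarrow> E (P i) w \<longleftrightarrow> w = P (Suc i) \<or> w = P (i + k - 1)"
  shows "is_cycle E (component V E (P 0)) k"
proof -
  define vs where "vs = map P [0..<k]"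
  have nth_vs: "vs ! (i mod k) = P i" for i
    using k periodic_eq_mod[of P k i, OF periodic] by (simp add: vs_def)
  have vs_eq_iff: "vs ! i = vs ! j \<longleftrightarrow> i = j" if "i < k" "j < k" for i j
    using nth_eq_iff_index_eq[of vs i j] dist that by (simp add: vs_def)
  have "set vs = range P"
  proof
    show "range P \<subseteq> set vs"
      using k nth_vs nth_mem[of "_ mod k" vs] by (auto simp: vs_def)
  qed (auto simp: vs_def)
  moreover have "component V E (P 0) = range P"
    using in_V nbrs by (intro component_eq_range) auto
  ultimately have C: "component V E (P 0) = set vs" by simp
  have edges: "E (vs ! i) (vs ! j) \<longleftrightarrow>
      (\<exists>l<k. vs ! i = vs ! l \<and> vs ! j = vs ! ((l + 1) mod k) \<or> vs ! j = vs ! l \<and> vs ! i = vs ! ((l + 1) mod k))"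
    if ij: "i < k" "j < k" for i j
  proof -
    have "E (vs ! i) (vs ! j) \<longleftrightarrow> vs ! j = vs ! ((i + 1) mod k) \<or> vs ! j = vs ! ((i + k - 1) mod k)"
      using nbrs[of "vs ! j" i] in_V nth_vs[of i] nth_vs[of j] nth_vs[of "i + 1"] nth_vs[of "i + k - 1"] ij
      by simp
    also have "\<dots> \<longleftrightarrow> j = (i + 1) mod k \<or> i = (j + 1) mod k"
      using vs_eq_iff ij k mod_pred_eq_iff[OF ij] by simp
    also have "\<dots> \<longleftrightarrow> (\<exists>l<k. vs ! i = vs ! l \<and> vs ! j = vs ! ((l + 1) mod k) \<or>
        vs ! j = vs ! l \<and> vs ! i = vs ! ((l + 1) mod k))"
      using vs_eq_iff ij k by auto
    finally show ?thesis .
  qed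
  show ?thesis
    unfolding is_cycle_def C
  proof (intro conjI exI[of _ vs] ballI)
    fix u w assume "u \<in> set vs" "w \<in> set vs"
    then obtain i j where "i < k" "j < k" "u = vs ! i" "w = vs ! j"
      by (auto simp: in_set_conv_nth vs_def)
    then show "E u w \<longleftrightarrow>
        (\<exists>l<k. u = vs ! l \<and> w = vs ! ((l + 1) mod k) \<or> w = vs ! l \<and> u = vs ! ((l + 1) mod k))"
      using edges by simp
  qed (use k dist in \<open>simp_all add: vs_def\<close>)
qed

lemma is_cycle_component_affine_orbit:
  fixes F a b w :: "'a::{finite,field}"
  assumes a: "a \<noteq> 0" and b: "b \<noteq> 0" and w: "w\<^sup>2 + w + 1 = 0" "w \<noteq> 1" and q: "4 \<le> CARD('a)"
    and k: "3 \<le> k" and order: "\<And>m. w ^ m = 1 \<and> (1 + w) ^ m = 1 \<longleftrightarrow> k dvd m"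
  shows "is_cycle (CA_adj F) (component AGL (CA_adj F) (affine_about F a b)) k"
proof -
  note w_facts = primitive_cube_root_of_unity[OF w]
  define v where "v = 1 + w"
  have period: "w ^ k = 1" "v ^ k = 1" using order[of k] by (simp_all add: v_def)
  have v0: "v \<noteq> 0" using period(2) k by (auto simp: power_0_left)
  have inverses: "w * w\<^sup>2 = 1" "v * (1 + w\<^sup>2) = 1"
    using w(1) w_facts(1) by (simp_all add: v_def algebra_simps power2_eq_square power3_eq_cube)
  have "w ^ (k - 1) = w\<^sup>2" "v ^ (k - 1) = 1 + w\<^sup>2"
    using power_pred_eq_if_mult_eq_1[OF period(1) inverses(1)]
      power_pred_eq_if_mult_eq_1[OF period(2) inverses(2)] k by simp_all
  moreover have "i + k - 1 = i + (k - 1)" for i using k by simp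
  ultimately have pred: "w ^ (i + k - 1) = w ^ i * w\<^sup>2" "v ^ (i + k - 1) = v ^ i * (1 + w\<^sup>2)" for i
    by (simp_all only: power_add)
  define P where "P i = affine_about F (a * w ^ i) (b * v ^ i)" for i
  have "P (i + k) = P i" for i
    using period by (simp add: P_def power_add)
  moreover have "distinct (map P [0..<k])"
  proof -
    have "P i \<noteq> P j" if "i < j" "j < k" for i j
      using powers_distinct_below_order[OF order w_facts(2) v0[unfolded v_def] that] a b
      by (auto simp: P_def v_def affine_about_eq_iff)
    then show ?thesis
      by (auto simp: distinct_conv_nth) (metis linorder_neqE_nat)
  qed
  moreover have "P i \<in> AGL" for i
    using a w_facts(2) by (simp add: P_def affine_about_in_AGL)
  moreover have "CA_adj F (P i) s \<longleftrightarrow> s = P (Suc i) \<or> s = P (i + k - 1)" for i s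
    using CA_adj_affine_about_iff[OF _ w q, of "a * w ^ i" F "b * v ^ i" s] a b v0 w_facts(2) pred
    by (simp add: P_def v_def ac_simps)
  ultimately have "is_cycle (CA_adj F) (component AGL (CA_adj F) (P 0)) k"
    using k by (intro is_cycle_component_of_periodic) auto
  then show ?thesis by (simp add: P_def)
qed

lemma isolated_iff_fixes_centre:
  fixes F w :: "'a::{finite,field}"
  assumes w: "w\<^sup>2 + w + 1 = 0" "w \<noteq> 1" and q: "4 \<le> CARD('a)" and p: "p \<in> AGL"
  shows "isolated (CA_adj F) p \<longleftrightarrow> p F = F"
proof -
  obtain a b where a: "a \<noteq> 0" and "p = affine_about F a b"
    using p by (rule AGL_obtain_affine_about)
  then show ?thesis
    unfolding isolated_def using CA_adj_affine_about_iff[OF a w q] by auto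
qed

lemma card_AGL_fixing:
  fixes F :: "'a::{finite,field}"
  shows "card {p \<in> AGL. p F = F} = CARD('a) - 1"
proof -
  have "{p \<in> AGL. p F = F} = (\<lambda>a. affine_about F a 0) ` (UNIV - {0})"
    by (auto simp: AGL_eq_affine_about[of F])
  moreover have "inj (\<lambda>a. affine_about F a 0)"
    by (intro injI) (simp add: affine_about_eq_iff)
  ultimately show ?thesis
    by (simp add: card_image inj_on_subset card_Diff_singleton)
qed

lemma CARD_ge_4_if_mod_3_eq_1:
  assumes "CARD('a::{finite,field}) mod 3 = 1"
  shows "4 \<le> CARD('a)"
proof -
  have "card {0, 1::'a} \<le> CARD('a)" by (rule card_mono) auto
  with assms show ?thesis by simp presburger
qed

theorem theorem6:
  fixes F :: "'a::{finite,field}"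
  assumes "CARD('a) mod 3 = 1"
  shows "{p \<in> AGL. isolated (CA_adj F) p} = {p \<in> AGL. p F = F}
       \<and> card {p \<in> (AGL :: ('a \<Rightarrow> 'a) set). isolated (CA_adj F) p} = CARD('a) - 1
       \<and> (odd CARD('a) \<longrightarrow> (\<forall>p\<in>AGL. \<not> isolated (CA_adj F) p \<longrightarrow>
             is_cycle (CA_adj F) (component AGL (CA_adj F) p) 6))
       \<and> (even CARD('a) \<longrightarrow> (\<forall>p\<in>AGL. \<not> isolated (CA_adj F) p \<longrightarrow>
             is_cycle (CA_adj F) (component AGL (CA_adj F) p) 3))"
proof -
  have q: "4 \<le> CARD('a)" using CARD_ge_4_if_mod_3_eq_1[OF assms] .
  obtain w :: 'a where w: "w\<^sup>2 + w + 1 = 0" "w \<noteq> 1"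
    using exists_primitive_cube_root_of_unity[OF assms] by blast
  have isolated: "{p \<in> AGL. isolated (CA_adj F) p} = {p \<in> AGL. p F = F}"
    using isolated_iff_fixes_centre[OF w q] by blast
  have cycle: "is_cycle (CA_adj F) (component AGL (CA_adj F) p) k"
    if "p \<in> AGL" "\<not> isolated (CA_adj F) p" "3 \<le> k"
      and "\<And>m. w ^ m = 1 \<and> (1 + w) ^ m = 1 \<longleftrightarrow> k dvd m" for p k
  proof -
    obtain a b where a: "a \<noteq> 0" and p: "p = affine_about F a b"
      using \<open>p \<in> AGL\<close> by (rule AGL_obtain_affine_about)
    with that(1,2) have "b \<noteq> 0" using isolated_iff_fixes_centre[OF w q] by simp
    then show ?thesis
      unfolding p by (rule is_cycle_component_affine_orbit[OF a _ w q that(3,4)])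
  qed
  show ?thesis
    using isolated card_AGL_fixing[of F]
      cycle[OF _ _ _ cube_root_and_successor_order_odd_card[OF w]]
      cycle[OF _ _ _ cube_root_and_successor_order_even_card[OF w]]
    by simp
qed

end
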